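(* Assume that $G=\mathbb Z_3^2$ acts on $\mathbb P^2$ (over $\mathbb C$) in such a way that the action is free outside a finite set. Then one can choose generators $g_1,g_2$ of $G$ and homogeneous coordinates $(x_0,x_1,x_2)$ on $\mathbb P^2$ such that $$g_1\colon(x_0,x_1,x_2)\mapsto(x_0,\omega x_1,\omega^2x_2),\qquad g_2\colon(x_0,x_1,x_2)\mapsto(x_1,x_2,x_0),$$ where $\omega\ne1$ is a cube root of $1$.
   Context: The action is by automorphisms of $\mathbb P^2$; "free outside a finite set" means that the set of points with nontrivial stabilizer is finite. *)

theory Defs
  imports "HOL-Analysis.Analysis" "HOL-Library.Numeral_Type"
begin

text \<open>The group G = Z_3^2 is modelled as the additive group of the type 3^2
 (vectors of length 2 over the ring Z/3Z = type 3).
 Points of P^2(C) are modelled as punctured lines {c v | c \<noteq> 0} of nonzero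
 vectors v in C^3.  Automorphisms of P^2 are elements of PGL(3,C), i.e.
 invertible 3x3 complex matrices taken up to a nonzero scalar.\<close>

definition proj_pt :: "complex^3 \<Rightarrow> (complex^3) set" where
  "proj_pt v = {c *s v | c. c \<noteq> 0}"

definition proj_eq :: "complex^3^3 \<Rightarrow> complex^3^3 \<Rightarrow> bool" where
  "proj_eq M N \<longleftrightarrow> (\<exists>c::complex. c \<noteq> 0 \<and> M = (\<chi> i j. c * N $ i $ j))"

definition pgl_action :: "(3^2 \<Rightarrow> complex^3^3) \<Rightarrow> bool" where
  "pgl_action \<rho> \<longleftrightarrow> (\<forall>g. invertible (\<rho> g)) \<and> proj_eq (\<rho> 0) (mat 1) \<and>
     (\<forall>g h. proj_eq (\<rho> (g + h)) (\<rho> g ** \<rho> h))"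

definition fixes_pt :: "complex^3^3 \<Rightarrow> complex^3 \<Rightarrow> bool" where
  "fixes_pt M v \<longleftrightarrow> (\<exists>c::complex. M *v v = c *s v)"

definition nonfree_points :: "(3^2 \<Rightarrow> complex^3^3) \<Rightarrow> (complex^3) set set" where
  "nonfree_points \<rho> = {proj_pt v | v. v \<noteq> 0 \<and> (\<exists>g. g \<noteq> 0 \<and> fixes_pt (\<rho> g) v)}"

definition diag_omega :: "complex \<Rightarrow> complex^3^3" where
  "diag_omega \<omega> = (\<chi> i j. if i = j then (if i = 0 then 1 else if i = 1 then \<omega> else \<omega>^2) else 0)"

text \<open>Matrix of (x0,x1,x2) \<mapsto> (x1,x2,x0).\<close>
definition cyc_perm :: "complex^3^3" where
  "cyc_perm = (\<chi> i j. if j = i + 1 then 1 else 0)"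

end

theory Submission
  imports Defs
begin

text \<open>
  Lift the two generators to matrices A and B. Since every group element has order 3, A and B
  have scalar cubes, and AB = cBA for a scalar c with c^3 = 1 (compare determinants).
  If a nonzero group element had a lift with a two-dimensional eigenspace, it would fix a whole
  projective line; so no lift is scalar, and since its cube is scalar it has two eigenvectors
  with distinct eigenvalues. If c = 1, B preserves the (one-dimensional) eigenlines of A, and the
  ratio of the eigenvalues on two of them is a character of the group with values in the cube
  roots of unity; it is trivial on some nonzero element, whose lift then has a two-dimensional
  eigenspace. Hence c is a primitive cube root of unity, and for an eigenvector v of A the
  vectors v, Bv, B^2 v are eigenvectors of A for the three distinct eigenvalues l, cl, c^2 l.
  In this basis, suitably rescaled, A is diagonal and B is the cyclic permutation.
\<close>

section \<open>Scalar matrices and projective equality\<close>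

lemma mat_mult_eq_scale: "mat c ** (N :: 'a::semiring_1^'n^'m) = (\<chi> i j. c * N $ i $ j)"
  by (simp add: vec_eq_iff matrix_matrix_mult_def mat_def if_distrib if_distribR sum.If_cases)

lemma mat_mult_mat: "mat c ** mat d = (mat (c * d) :: 'a::semiring_1^'n^'n)"
  by (simp add: mat_mult_eq_scale) (simp add: mat_def vec_eq_iff)

lemma matrix_mul_mat_commute: "N ** mat c = mat c ** (N :: 'a::comm_semiring_1^'n^'m)"
  by (simp add: vec_eq_iff matrix_matrix_mult_def mat_def if_distrib if_distribR sum.If_cases mult.commute)

lemma matrix_vector_mult_mat: "mat c *v v = c *s (v :: 'a::semiring_1^'n)"
  by (simp add: vec_eq_iff matrix_vector_mult_def mat_def if_distrib if_distribR sum.If_cases)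

lemma det_mat: "det (mat c :: 'a::comm_ring_1^'n^'n) = c ^ CARD('n)"
  by (simp add: det_diagonal mat_def)

lemma proj_eq_iff_mat: "proj_eq M N \<longleftrightarrow> (\<exists>c. c \<noteq> 0 \<and> M = mat c ** N)"
  unfolding proj_eq_def mat_mult_eq_scale ..

lemma proj_eq_refl: "proj_eq M M"
  unfolding proj_eq_iff_mat by (intro exI[of _ 1]) simp

lemma proj_eq_sym: "proj_eq M N \<Longrightarrow> proj_eq N M"
proof -
  assume "proj_eq M N"
  then obtain c where "c \<noteq> 0" "M = mat c ** N"
    unfolding proj_eq_iff_mat by blast
  then have "N = mat (1 / c) ** M"
    by (simp add: matrix_mul_assoc mat_mult_mat)
  then show ?thesis
    unfolding proj_eq_iff_mat using \<open>c \<noteq> 0\<close> by (intro exI[of _ "1 / c"]) simp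
qed

lemma proj_eq_trans [trans]: "proj_eq L M \<Longrightarrow> proj_eq M N \<Longrightarrow> proj_eq L N"
proof -
  assume "proj_eq L M" "proj_eq M N"
  then obtain c d where "c \<noteq> 0" "L = mat c ** M" "d \<noteq> 0" "M = mat d ** N"
    unfolding proj_eq_iff_mat by blast
  then show ?thesis
    unfolding proj_eq_iff_mat by (intro exI[of _ "c * d"]) (simp add: matrix_mul_assoc mat_mult_mat)
qed

lemma proj_eq_mult: "proj_eq M M' \<Longrightarrow> proj_eq N N' \<Longrightarrow> proj_eq (M ** N) (M' ** N')"
proof -
  assume "proj_eq M M'" "proj_eq N N'"
  then obtain c d where "c \<noteq> 0" "M = mat c ** M'" "d \<noteq> 0" "N = mat d ** N'"
    unfolding proj_eq_iff_mat by blast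
  then have "M ** N = mat c ** ((M' ** mat d) ** N')"
    by (simp add: matrix_mul_assoc)
  also have "\<dots> = mat (c * d) ** (M' ** N')"
    by (subst matrix_mul_mat_commute) (simp add: matrix_mul_assoc mat_mult_mat)
  finally have "M ** N = mat (c * d) ** (M' ** N')" .
  then show ?thesis
    unfolding proj_eq_iff_mat using \<open>c \<noteq> 0\<close> \<open>d \<noteq> 0\<close> by (intro exI[of _ "c * d"]) simp
qed

section \<open>Cube roots of unity\<close>

lemma cube_root_exists: "\<exists>t::complex. t ^ 3 = z"
proof (cases "z = 0")
  case False
  have "exp (Ln z / 3) ^ 3 = exp (of_nat 3 * (Ln z / 3))"
    by (simp only: exp_of_nat_mult)
  also have "\<dots> = z"
    using False by simp
  finally show ?thesis by blast
qed simp

lemma primitive_cube_root_of_unity_exists: "\<exists>\<omega>::complex. 1 + \<omega> + \<omega>\<^sup>2 = 0"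
  by (intro exI[of _ "Complex (-1/2) (sqrt 3 / 2)"]) (simp add: complex_eq_iff power2_eq_square)

lemma primitive_cube_root_of_unity_iff:
  fixes \<omega> :: "'a::{idom,ring_char_0}"
  shows "1 + \<omega> + \<omega>\<^sup>2 = 0 \<longleftrightarrow> \<omega> ^ 3 = 1 \<and> \<omega> \<noteq> 1"
proof -
  have factor: "\<omega> ^ 3 - 1 = (\<omega> - 1) * (1 + \<omega> + \<omega>\<^sup>2)"
    by (simp add: algebra_simps power2_eq_square power3_eq_cube)
  have "1 + 1 + 1\<^sup>2 \<noteq> (0::'a)"
    by simp
  then show ?thesis
    using factor by auto
qed

lemma primitive_cube_root_of_unity_powers:
  fixes c :: "'a::idom"
  assumes "c ^ 3 = 1" "c \<noteq> 1"
  shows "c \<noteq> 0" "c\<^sup>2 \<noteq> 1" "c\<^sup>2 \<noteq> c" "c\<^sup>2 * c\<^sup>2 = c"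
proof -
  have c3: "c ^ 3 = c\<^sup>2 * c" "c\<^sup>2 * c\<^sup>2 = c ^ 3 * c"
    by (simp_all add: power2_eq_square power3_eq_cube mult_ac)
  show "c \<noteq> 0" "c\<^sup>2 \<noteq> 1" "c\<^sup>2 * c\<^sup>2 = c"
    using assms c3 by auto
  show "c\<^sup>2 \<noteq> c"
  proof
    assume "c\<^sup>2 = c"
    then have "c ^ 3 = c"
      using c3(1) by (metis power2_eq_square)
    with assms show False
      by simp
  qed
qed

lemma cube_roots_of_unity_cases:
  fixes r t :: "'a::idom"
  assumes "1 + r + r\<^sup>2 = 0" "t ^ 3 = 1"
  shows "t = 1 \<or> t = r \<or> t = r\<^sup>2"
proof -
  have "(t - 1) * (t - r) * (t - r\<^sup>2) = t ^ 3 - 1"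
    using assms(1) by algebra
  then show ?thesis
    using assms(2) by auto
qed

section \<open>Eigenvectors of matrices with scalar cube\<close>

definition indep_pair :: "'a::field^'n \<Rightarrow> 'a^'n \<Rightarrow> bool" where
  "indep_pair u w \<longleftrightarrow> (\<forall>a b. a *s u + b *s w = 0 \<longrightarrow> a = 0 \<and> b = 0)"

lemma indep_pair_eigenvectors:
  fixes M :: "'a::field^'n^'n"
  assumes "M *v u = \<kappa> *s u" "M *v w = \<mu> *s w" "u \<noteq> 0" "w \<noteq> 0" "\<kappa> \<noteq> \<mu>"
  shows "indep_pair u w"
  unfolding indep_pair_def
proof (intro allI impI)
  fix a b
  assume comb: "a *s u + b *s w = 0"
  then have "M *v (a *s u + b *s w) - \<kappa> *s (a *s u + b *s w) = 0"
    by simp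
  then have "(b * (\<mu> - \<kappa>)) *s w = 0"
    using assms(1,2) by (simp add: vec_eq_iff matrix_vector_right_distrib vector_scalar_commute algebra_simps)
  then have "b = 0"
    using assms(4,5) by simp
  with comb assms(3) show "a = 0 \<and> b = 0"
    by simp
qed

lemma independent_three_eigenvectors:
  fixes M :: "'a::field^'n^'n"
  assumes "M *v u = \<kappa> *s u" "M *v v = \<mu> *s v" "M *v w = \<nu> *s w"
    and "u \<noteq> 0" "v \<noteq> 0" "w \<noteq> 0" "\<kappa> \<noteq> \<mu>" "\<kappa> \<noteq> \<nu>" "\<mu> \<noteq> \<nu>"
    and comb: "a *s u + b *s v + c *s w = 0"
  shows "a = 0 \<and> b = 0 \<and> c = 0"
proof -
  have "M *v (a *s u + b *s v + c *s w) - \<kappa> *s (a *s u + b *s v + c *s w) = 0"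
    using comb by simp
  then have "(b * (\<mu> - \<kappa>)) *s v + (c * (\<nu> - \<kappa>)) *s w = 0"
    using assms(1-3) by (simp add: vec_eq_iff matrix_vector_right_distrib vector_scalar_commute algebra_simps)
  then have "b * (\<mu> - \<kappa>) = 0 \<and> c * (\<nu> - \<kappa>) = 0"
    using indep_pair_eigenvectors[OF assms(2,3,5,6,9)] unfolding indep_pair_def by blast
  then have "b = 0" "c = 0"
    using assms(7,8) by auto
  with comb assms(4) show ?thesis
    by simp
qed

lemma eigenvalue_cube:
  fixes M :: "'a::field^'n^'n"
  assumes "M ** M ** M = mat \<alpha>" "M *v v = l *s v" "v \<noteq> 0"
  shows "l ^ 3 = \<alpha>"
proof -
  have "\<alpha> *s v = (M ** M ** M) *v v"
    using assms(1) by (simp add: matrix_vector_mult_mat)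
  also have "\<dots> = l ^ 3 *s v"
    using assms(2) by (simp add: matrix_vector_mul_assoc[symmetric] vector_scalar_commute power3_eq_cube)
  finally show ?thesis
    using assms(3) by (metis vec.scale_cancel_right)
qed

lemma injective_if_cube_scalar:
  fixes B :: "'a::field^'n^'n"
  assumes "B ** B ** B = mat \<beta>" "\<beta> \<noteq> 0" "B *v x = 0"
  shows "x = 0"
proof -
  have "\<beta> *s x = (B ** B ** B) *v x"
    using assms(1) by (simp add: matrix_vector_mult_mat)
  also have "\<dots> = 0"
    using assms(3) by (simp flip: matrix_vector_mul_assoc)
  finally show ?thesis
    using assms(2) by simp
qed

lemma cube_scalar_eigenvector:
  fixes M :: "'a::field^'n^'n"
  assumes "M ** M ** M = mat (l ^ 3)"
  shows "M *v (M *v (M *v x) + l *s (M *v x) + l\<^sup>2 *s x)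
    = l *s (M *v (M *v x) + l *s (M *v x) + l\<^sup>2 *s x)"
proof -
  have "M *v (M *v (M *v x)) = l ^ 3 *s x"
    using assms by (metis matrix_vector_mul_assoc matrix_vector_mult_mat)
  then show ?thesis
    by (simp add: matrix_vector_right_distrib vector_scalar_commute vec_eq_iff algebra_simps
        power2_eq_square power3_eq_cube)
qed

text \<open>Lagrange interpolation at the three cube roots of t^3; with y_k = M^k x it splits x
  into eigenvectors of M.\<close>
lemma cube_roots_interpolation:
  fixes \<omega> t :: "'a::idom" and y0 y1 y2 :: "'a^'n"
  assumes \<omega>: "1 + \<omega> + \<omega>\<^sup>2 = 0"
  defines "q \<equiv> \<lambda>l. y2 + l *s y1 + l\<^sup>2 *s y0"
  shows "t *s q t + (t * \<omega>) *s q (t * \<omega>) + (t * \<omega>\<^sup>2) *s q (t * \<omega>\<^sup>2) = (3 * t ^ 3) *s y0"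
  unfolding q_def vec_eq_iff using \<omega> by (simp, intro allI impI, algebra)

lemma cube_scalar_two_eigenvalues:
  fixes M :: "complex^'n^'n"
  assumes cube: "M ** M ** M = mat \<alpha>" and "\<alpha> \<noteq> 0" and nonscalar: "\<forall>l. M \<noteq> mat l"
  obtains u w \<mu> \<nu> where "u \<noteq> 0" "w \<noteq> 0" "\<mu> \<noteq> \<nu>" "M *v u = \<mu> *s u" "M *v w = \<nu> *s w"
proof -
  obtain \<omega> :: complex where \<omega>: "1 + \<omega> + \<omega>\<^sup>2 = 0"
    using primitive_cube_root_of_unity_exists by blast
  obtain t where t: "t ^ 3 = \<alpha>"
    using cube_root_exists by blast
  with \<open>\<alpha> \<noteq> 0\<close> have "t \<noteq> 0"
    by auto
  define R where "R = {t, t * \<omega>, t * \<omega>\<^sup>2}"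
  define p where "p l x = M *v (M *v x) + l *s (M *v x) + l\<^sup>2 *s x" for l x
  have "(t * \<omega>) ^ 3 = t ^ 3" "(t * \<omega>\<^sup>2) ^ 3 = t ^ 3"
    using \<omega> by algebra+
  then have "l ^ 3 = \<alpha>" if "l \<in> R" for l
    using that t by (auto simp: R_def)
  then have eigen: "M *v p l x = l *s p l x" if "l \<in> R" for l x
    using cube_scalar_eigenvector[of M l x] cube that by (simp add: p_def)
  have decomp: "t *s p t x + (t * \<omega>) *s p (t * \<omega>) x + (t * \<omega>\<^sup>2) *s p (t * \<omega>\<^sup>2) x = (3 * \<alpha>) *s x" for x
    using cube_roots_interpolation[OF \<omega>, of t "M *v (M *v x)" "M *v x" x] t by (simp add: p_def)
  have "\<omega> ^ 3 = 1" "\<omega> \<noteq> 1"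
    using \<omega> by (simp_all add: primitive_cube_root_of_unity_iff)
  then have distinct: "t \<noteq> t * \<omega>" "t \<noteq> t * \<omega>\<^sup>2" "t * \<omega> \<noteq> t * \<omega>\<^sup>2"
    using primitive_cube_root_of_unity_powers[of \<omega>] \<open>t \<noteq> 0\<close> by auto
  show ?thesis
  proof (cases "\<exists>l\<in>R. \<exists>l'\<in>R. l \<noteq> l' \<and> (\<exists>x. p l x \<noteq> 0) \<and> (\<exists>x'. p l' x' \<noteq> 0)")
    case True
    then show ?thesis
      using eigen that by blast
  next
    case False
    then obtain l0 where "l0 \<in> R" and others: "\<forall>l\<in>R - {l0}. \<forall>x. p l x = 0"
      unfolding R_def by blast
    then have "(3 * \<alpha>) *s x = l0 *s p l0 x" for x
      using decomp[of x] distinct by (auto simp: R_def)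
    then have "(3 * \<alpha>) *s (M *v x) = (3 * \<alpha>) *s (l0 *s x)" for x
      using eigen[OF \<open>l0 \<in> R\<close>] by (metis vector_scalar_commute vec.scale_left_commute)
    then have "M *v x = l0 *s x" for x
      using \<open>\<alpha> \<noteq> 0\<close> by (metis vec.scale_left_imp_eq mult_eq_0_iff zero_neq_numeral)
    then have "M = mat l0"
      by (simp add: matrix_eq matrix_vector_mult_mat)
    with nonscalar show ?thesis
      by blast
  qed
qed

lemma eigenvector_shift:
  fixes A B :: "'a::field^'n^'n"
  assumes "A ** B = mat c ** (B ** A)" "A *v x = l *s x"
  shows "A *v (B *v x) = (c * l) *s (B *v x)"
proof -
  have "A *v (B *v x) = (mat c ** (B ** A)) *v x"
    by (metis assms(1) matrix_vector_mul_assoc)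
  then show ?thesis
    using assms(2) by (simp add: matrix_vector_mul_assoc[symmetric] matrix_vector_mult_mat vector_scalar_commute)
qed

definition eigen_ratio :: "'a::field^'n^'n \<Rightarrow> 'a^'n \<Rightarrow> 'a^'n \<Rightarrow> 'a \<Rightarrow> bool" where
  "eigen_ratio M u w z \<longleftrightarrow> (\<exists>a. M *v u = a *s u \<and> M *v w = (a * z) *s w)"

lemma eigen_ratio_mult:
  assumes "eigen_ratio M u w y" "eigen_ratio N u w z"
  shows "eigen_ratio (M ** N) u w (y * z)"
proof -
  obtain a b where "M *v u = a *s u" "M *v w = (a * y) *s w" "N *v u = b *s u" "N *v w = (b * z) *s w"
    using assms unfolding eigen_ratio_def by blast
  then have "(M ** N) *v u = (a * b) *s u" "(M ** N) *v w = ((a * b) * (y * z)) *s w"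
    by (simp_all add: matrix_vector_mul_assoc[symmetric] vector_scalar_commute mult_ac)
  then show ?thesis
    unfolding eigen_ratio_def by blast
qed

lemma eigen_ratio_proj_eq: "proj_eq M N \<Longrightarrow> eigen_ratio N u w z \<Longrightarrow> eigen_ratio M u w z"
  unfolding proj_eq_iff_mat eigen_ratio_def
  by (auto simp: matrix_vector_mul_assoc[symmetric] matrix_vector_mult_mat mult.assoc)

lemma eigen_ratio_of_cube_scalar:
  fixes M :: "'a::field^'n^'n"
  assumes "M ** M ** M = mat \<alpha>" "\<alpha> \<noteq> 0"
    and "M *v u = a *s u" "M *v w = b *s w" "u \<noteq> 0" "w \<noteq> 0"
  shows "eigen_ratio M u w (b / a)" "(b / a) ^ 3 = 1"
proof -
  have "a ^ 3 = \<alpha>" "b ^ 3 = \<alpha>"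
    using eigenvalue_cube assms by blast+
  with assms(2) have "a \<noteq> 0" "(b / a) ^ 3 = 1"
    by (auto simp: power_divide)
  with assms(3,4) show "eigen_ratio M u w (b / a)" "(b / a) ^ 3 = 1"
    unfolding eigen_ratio_def by auto
qed

section \<open>Projective actions of the group 3^2\<close>

lemma three_times_eq_0: "x + x + x = (0 :: 3^'n)"
proof -
  have three: "(3::3) = 0" by simp
  show ?thesis by (simp add: vec_eq_iff) (metis three mult_zero_left)
qed

lemma span_axis_3_2: "{a *s axis 1 1 + b *s axis 2 1 | a b :: 3. True} = (UNIV :: (3^2) set)"
proof -
  have "x = x $ 1 *s axis 1 1 + x $ 2 *s axis 2 1" for x :: "3^2"
    unfolding vec_eq_iff using exhaust_2 by (auto simp: axis_def)
  then show ?thesis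
    by blast
qed

lemma axis_3_2_combinations_nonzero:
  defines "g1 \<equiv> axis 1 1 :: 3^2" and "g2 \<equiv> axis 2 1 :: 3^2"
  shows "g1 \<noteq> 0" "g2 \<noteq> 0" "g1 + g2 \<noteq> 0" "g1 + (g1 + g2) \<noteq> 0"
proof -
  have "g1 $ 1 = 1" "g2 $ 2 = 1" "(g1 + g2) $ 1 = 1" "(g1 + (g1 + g2)) $ 2 = 1"
    by (simp_all add: g1_def g2_def axis_def)
  then show "g1 \<noteq> 0" "g2 \<noteq> 0" "g1 + g2 \<noteq> 0" "g1 + (g1 + g2) \<noteq> 0"
    by (metis one_neq_zero zero_index)+
qed

lemma pgl_action_add: "pgl_action \<rho> \<Longrightarrow> proj_eq (\<rho> (g + h)) (\<rho> g ** \<rho> h)"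
  unfolding pgl_action_def by blast

lemma pgl_action_cube_scalar:
  assumes "pgl_action \<rho>"
  obtains \<alpha> where "\<alpha> \<noteq> 0" "\<rho> g ** \<rho> g ** \<rho> g = mat \<alpha>"
proof -
  have "proj_eq (\<rho> g ** \<rho> g ** \<rho> g) (\<rho> (g + g) ** \<rho> g)"
    using assms by (intro proj_eq_mult proj_eq_refl proj_eq_sym[OF pgl_action_add])
  also have "proj_eq \<dots> (\<rho> (g + g + g))"
    using assms by (rule proj_eq_sym[OF pgl_action_add])
  also have "\<rho> (g + g + g) = \<rho> 0"
    by (simp only: three_times_eq_0)
  also have "proj_eq \<dots> (mat 1)"
    using assms unfolding pgl_action_def by blast
  finally obtain \<alpha> where "\<alpha> \<noteq> 0" "\<rho> g ** \<rho> g ** \<rho> g = mat \<alpha> ** mat 1"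
    unfolding proj_eq_iff_mat by blast
  then show ?thesis
    using that by simp
qed

lemma pgl_action_commutator:
  assumes "pgl_action \<rho>"
  obtains c where "c \<noteq> 0" "\<rho> g ** \<rho> h = mat c ** (\<rho> h ** \<rho> g)"
proof -
  have "proj_eq (\<rho> g ** \<rho> h) (\<rho> (g + h))"
    using assms by (rule proj_eq_sym[OF pgl_action_add])
  also have "proj_eq (\<rho> (g + h)) (\<rho> h ** \<rho> g)"
    using assms pgl_action_add[of \<rho> h g] by (simp add: add.commute)
  finally show ?thesis
    using that unfolding proj_eq_iff_mat by blast
qed

lemma commutator_scalar_root_of_unity:
  fixes A B :: "'a::field^'n^'n"
  assumes "A ** B = mat c ** (B ** A)" "invertible A" "invertible B"
  shows "c ^ CARD('n) = 1"
proof -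
  have "det (A ** B) = det (mat c ** (B ** A))"
    using assms(1) by simp
  also have "\<dots> = c ^ CARD('n) * det (A ** B)"
    by (simp add: det_mul det_mat mult.commute)
  finally have "det (A ** B) = c ^ CARD('n) * det (A ** B)" .
  moreover have "det (A ** B) \<noteq> 0"
    using assms(2,3) by (simp add: invertible_det_nz det_mul)
  ultimately show ?thesis by simp
qed

lemma pgl_action_eigen_ratio_add:
  assumes "pgl_action \<rho>" "eigen_ratio (\<rho> g) u w y" "eigen_ratio (\<rho> h) u w z"
  shows "eigen_ratio (\<rho> (g + h)) u w (y * z)"
  using assms by (blast intro: eigen_ratio_proj_eq pgl_action_add eigen_ratio_mult)

lemma infinite_nonfree_points:
  assumes "g \<noteq> 0" "eigen_ratio (\<rho> g) u w 1" "indep_pair u w"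
  shows "infinite (nonfree_points \<rho>)"
proof -
  define f where "f t = proj_pt (u + t *s w)" for t
  have nonzero: "u + t *s w \<noteq> 0" for t
    using assms(3) unfolding indep_pair_def by (metis one_neq_zero vec.scale_one)
  have "range f \<subseteq> nonfree_points \<rho>"
  proof safe
    fix t
    obtain a where "\<rho> g *v u = a *s u" "\<rho> g *v w = a *s w"
      using assms(2) unfolding eigen_ratio_def by auto
    then have "\<rho> g *v (u + t *s w) = a *s (u + t *s w)"
      by (simp add: matrix_vector_right_distrib vector_scalar_commute vec.scale_right_distrib
          vec.scale_left_commute)
    then have "fixes_pt (\<rho> g) (u + t *s w)"
      unfolding fixes_pt_def by blast
    then show "f t \<in> nonfree_points \<rho>"
      unfolding nonfree_points_def f_def using nonzero assms(1) by blast
  qed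
  moreover have "inj f"
  proof (rule injI)
    fix s t
    assume "f s = f t"
    then have "u + s *s w \<in> proj_pt (u + t *s w)"
      unfolding f_def proj_pt_def by (metis (mono_tags, lifting) mem_Collect_eq one_neq_zero vec.scale_one)
    then obtain c where "u + s *s w = c *s (u + t *s w)"
      unfolding proj_pt_def by blast
    then have "(1 - c) *s u + (s - c * t) *s w = 0"
      by (simp add: algebra_simps vec.scale_right_distrib vec.scale_left_diff_distrib)
    then show "s = t"
      using assms(3) unfolding indep_pair_def by fastforce
  qed
  ultimately show ?thesis
    by (metis finite_imageD finite_subset infinite_UNIV_char_0)
qed

lemma eigenspace_is_line:
  assumes "finite (nonfree_points \<rho>)" "g \<noteq> 0"
    and "\<rho> g *v v = l *s v" "v \<noteq> 0" "\<rho> g *v w = l *s w"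
  shows "\<exists>c. w = c *s v"
proof (rule ccontr)
  assume not_line: "\<nexists>c. w = c *s v"
  have "indep_pair v w"
    unfolding indep_pair_def
  proof (intro allI impI)
    fix a b
    assume comb: "a *s v + b *s w = 0"
    have "b = 0"
    proof (rule ccontr)
      assume "b \<noteq> 0"
      with comb have "w = (- a / b) *s v"
        by (simp add: vec_eq_iff field_simps) (metis add.commute add_eq_0_iff mult.commute)
      with not_line show False by blast
    qed
    with comb assms(4) show "a = 0 \<and> b = 0" by simp
  qed
  moreover have "eigen_ratio (\<rho> g) v w 1"
    using assms(3,5) unfolding eigen_ratio_def by auto
  ultimately show False
    using infinite_nonfree_points assms(1,2) by blast
qed

lemma commuting_preserves_eigenline:
  assumes "finite (nonfree_points \<rho>)" "g \<noteq> 0" "\<rho> g ** M = M ** \<rho> g"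
    and "\<rho> g *v v = l *s v" "v \<noteq> 0"
  shows "\<exists>b. M *v v = b *s v"
proof (rule eigenspace_is_line[OF assms(1,2,4,5)])
  show "\<rho> g *v (M *v v) = l *s (M *v v)"
    using assms(3,4) by (metis matrix_vector_mul_assoc vector_scalar_commute)
qed

lemma nonscalar_if_finite_nonfree_points:
  assumes "finite (nonfree_points \<rho>)" "g \<noteq> 0"
  shows "\<rho> g \<noteq> mat l"
proof
  assume scalar: "\<rho> g = mat l"
  define u :: "complex^3" where "u = axis 1 1"
  define w :: "complex^3" where "w = axis 2 1"
  have "indep_pair u w"
    unfolding indep_pair_def
  proof (intro allI impI)
    fix a b
    assume "a *s u + b *s w = 0"
    then have "(a *s u + b *s w) $ 1 = 0" "(a *s u + b *s w) $ 2 = 0"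
      by simp_all
    then show "a = 0 \<and> b = 0"
      by (simp add: u_def w_def axis_def)
  qed
  moreover have "eigen_ratio (\<rho> g) u w 1"
    unfolding eigen_ratio_def scalar by (intro exI[of _ l]) (simp add: matrix_vector_mult_mat)
  ultimately show False
    using infinite_nonfree_points assms by blast
qed

lemma pgl_action_two_eigenvalues:
  assumes "pgl_action \<rho>" "finite (nonfree_points \<rho>)" "g \<noteq> 0"
  obtains u w \<mu> \<nu> where "u \<noteq> 0" "w \<noteq> 0" "\<mu> \<noteq> \<nu>" "\<rho> g *v u = \<mu> *s u" "\<rho> g *v w = \<nu> *s w"
proof -
  obtain \<alpha> where "\<alpha> \<noteq> 0" "\<rho> g ** \<rho> g ** \<rho> g = mat \<alpha>"
    using pgl_action_cube_scalar[OF assms(1)] by blast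
  moreover have "\<forall>l. \<rho> g \<noteq> mat l"
    using nonscalar_if_finite_nonfree_points[OF assms(2,3)] by blast
  ultimately show ?thesis
    using cube_scalar_two_eigenvalues that by blast
qed

lemma lifts_do_not_commute:
  assumes \<rho>: "pgl_action \<rho>" and fin: "finite (nonfree_points \<rho>)"
    and nonzero: "g \<noteq> 0" "h \<noteq> 0" "g + h \<noteq> 0" "g + (g + h) \<noteq> 0"
  shows "\<rho> g ** \<rho> h \<noteq> \<rho> h ** \<rho> g"
proof
  assume comm: "\<rho> g ** \<rho> h = \<rho> h ** \<rho> g"
  obtain v0 v1 l0 l1 where v: "v0 \<noteq> 0" "v1 \<noteq> 0" "l0 \<noteq> l1"
    and g_eigen: "\<rho> g *v v0 = l0 *s v0" "\<rho> g *v v1 = l1 *s v1"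
    using pgl_action_two_eigenvalues[OF \<rho> fin nonzero(1)] by blast
  obtain b0 b1 where h_eigen: "\<rho> h *v v0 = b0 *s v0" "\<rho> h *v v1 = b1 *s v1"
    using commuting_preserves_eigenline[OF fin nonzero(1) comm] g_eigen v by metis
  obtain \<alpha> \<beta> where g_cube: "\<rho> g ** \<rho> g ** \<rho> g = mat \<alpha>" "\<alpha> \<noteq> 0"
    and h_cube: "\<rho> h ** \<rho> h ** \<rho> h = mat \<beta>" "\<beta> \<noteq> 0"
    using pgl_action_cube_scalar[OF \<rho>] by metis
  have "l0 \<noteq> 0"
    using eigenvalue_cube[OF g_cube(1) g_eigen(1) v(1)] g_cube(2) by auto
  then have "\<exists>r. eigen_ratio (\<rho> g) v0 v1 r \<and> r ^ 3 = 1 \<and> r \<noteq> 1"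
    using eigen_ratio_of_cube_scalar[OF g_cube g_eigen v(1,2)] v(3) by auto
  moreover have "\<exists>t. eigen_ratio (\<rho> h) v0 v1 t \<and> t ^ 3 = 1"
    using eigen_ratio_of_cube_scalar[OF h_cube h_eigen v(1,2)] by blast
  ultimately obtain r t where r: "eigen_ratio (\<rho> g) v0 v1 r" "r ^ 3 = 1" "r \<noteq> 1"
    and t: "eigen_ratio (\<rho> h) v0 v1 t" "t ^ 3 = 1"
    by blast
  \<comment> \<open>The ratios form a character of the group; it is trivial on h, g + h or 2g + h.\<close>
  then have "1 + r + r\<^sup>2 = 0"
    by (simp add: primitive_cube_root_of_unity_iff)
  with t(2) r(2) have "t = 1 \<or> r * t = 1 \<or> r * (r * t) = 1"
    using cube_roots_of_unity_cases[of r t] by (auto simp: power2_eq_square power3_eq_cube mult_ac)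
  moreover have "eigen_ratio (\<rho> h) v0 v1 t" "eigen_ratio (\<rho> (g + h)) v0 v1 (r * t)"
    "eigen_ratio (\<rho> (g + (g + h))) v0 v1 (r * (r * t))"
    using r(1) t(1) by (blast intro: pgl_action_eigen_ratio_add[OF \<rho>])+
  moreover have "indep_pair v0 v1"
    using indep_pair_eigenvectors g_eigen v by blast
  ultimately show False
    using infinite_nonfree_points fin nonzero by metis
qed

lemma pgl_action_eigenvector:
  assumes "pgl_action \<rho>" "finite (nonfree_points \<rho>)" "g \<noteq> 0"
  obtains v l where "\<rho> g *v v = l *s v" "v \<noteq> 0" "l \<noteq> 0"
proof -
  obtain \<alpha> where cube: "\<rho> g ** \<rho> g ** \<rho> g = mat \<alpha>" "\<alpha> \<noteq> 0"
    using pgl_action_cube_scalar[OF assms(1)] by metis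
  obtain v l where "\<rho> g *v v = l *s v" "v \<noteq> 0"
    using pgl_action_two_eigenvalues[OF assms] by metis
  moreover from this have "l ^ 3 = \<alpha>"
    using eigenvalue_cube[OF cube(1)] by blast
  ultimately show ?thesis
    using that cube(2) by fastforce
qed

lemma pgl_action_commutator_primitive:
  assumes "pgl_action \<rho>" "finite (nonfree_points \<rho>)"
    and "g \<noteq> 0" "h \<noteq> 0" "g + h \<noteq> 0" "g + (g + h) \<noteq> 0"
  obtains c where "\<rho> g ** \<rho> h = mat c ** (\<rho> h ** \<rho> g)" "c ^ 3 = 1" "c \<noteq> 1"
proof -
  obtain c where AB: "\<rho> g ** \<rho> h = mat c ** (\<rho> h ** \<rho> g)"
    using pgl_action_commutator[OF assms(1)] by blast
  moreover from this have "c ^ 3 = 1"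
    using commutator_scalar_root_of_unity assms(1) unfolding pgl_action_def by fastforce
  moreover have "c \<noteq> 1"
    using lifts_do_not_commute[OF assms] AB by auto
  ultimately show ?thesis
    using that by blast
qed

section \<open>Normal form of a Heisenberg pair\<close>

lemma matrix_inv:
  assumes "invertible A"
  shows "A ** matrix_inv A = mat 1" "matrix_inv A ** A = mat 1"
  using someI_ex[OF assms[unfolded invertible_def]] unfolding matrix_inv_def by blast+

lemma matrix_inv_matrix_inv:
  assumes "invertible A"
  shows "invertible (matrix_inv A)" "matrix_inv (matrix_inv A) = A"
proof -
  show inv: "invertible (matrix_inv A)"
    using matrix_inv[OF assms] unfolding invertible_def by blast
  have "matrix_inv (matrix_inv A) = (A ** matrix_inv A) ** matrix_inv (matrix_inv A)"
    by (simp add: matrix_inv[OF assms])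
  also have "\<dots> = A"
    by (simp add: matrix_mul_assoc[symmetric] matrix_inv[OF inv])
  finally show "matrix_inv (matrix_inv A) = A" .
qed

lemma matrix_inv_conjugate:
  assumes "invertible Q" "A ** Q = Q ** D"
  shows "matrix_inv Q ** A ** matrix_inv (matrix_inv Q) = D"
proof -
  have "matrix_inv Q ** A ** Q = matrix_inv Q ** (Q ** D)"
    by (simp add: assms(2) flip: matrix_mul_assoc)
  also have "\<dots> = D"
    by (simp add: matrix_mul_assoc matrix_inv[OF assms(1)])
  finally show ?thesis
    by (simp add: matrix_inv_matrix_inv[OF assms(1)])
qed

lemma matrix_mult_columns: "A ** (\<chi> i j. F j $ i) = (\<chi> i j. (A *v F j) $ i)"
  by (simp add: vec_eq_iff matrix_matrix_mult_def matrix_vector_mult_def)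

lemma columns_matrix_mult:
  "(\<chi> i j. F j $ i) ** (N :: 'a::comm_semiring_1^'n^'n) = (\<chi> i j. (\<Sum>k\<in>UNIV. N $ k $ j *s F k) $ i)"
  by (simp add: vec_eq_iff matrix_matrix_mult_def sum_component mult.commute)

lemma columns_matrix_vector_mult:
  "(\<chi> i j. F j $ i) *v (x :: 'a::comm_semiring_1^'n) = (\<Sum>j\<in>UNIV. x $ j *s F j)"
  by (simp add: vec_eq_iff matrix_vector_mult_def sum_component mult.commute)

lemma columns_matrix_mult_single_entry:
  assumes "\<And>k. N $ k $ j = (if k = m then x else 0)"
  shows "((\<chi> i j. F j $ i) ** (N :: 'a::comm_semiring_1^'n^'n)) $ i $ j = x * F m $ i"
proof -
  have "(\<Sum>k\<in>UNIV. N $ k $ j * F k $ i) = (\<Sum>k\<in>UNIV. if k = m then x * F m $ i else 0)"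
    by (rule sum.cong) (auto simp: assms)
  then show ?thesis
    unfolding columns_matrix_mult by (simp add: sum_component)
qed

lemma columns_mult_scaled_diag:
  "(\<chi> i j. F j $ i) ** (mat l ** diag_omega \<omega>) = (\<chi> i j. (l * diag_omega \<omega> $ j $ j) * F j $ i)"
proof -
  have "(mat l ** diag_omega \<omega>) $ k $ j = (if k = j then l * diag_omega \<omega> $ j $ j else 0)" for k j
    by (simp add: mat_mult_eq_scale diag_omega_def)
  then show ?thesis
    by (simp add: vec_eq_iff columns_matrix_mult_single_entry)
qed

lemma columns_mult_scaled_cyc_perm:
  "(\<chi> i j. F j $ i) ** (mat s ** cyc_perm) = (\<chi> i j. s * F (j - 1) $ i)"
proof -
  have "(mat s ** cyc_perm) $ k $ j = (if k = j - 1 then s else 0)" for k j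
    by (auto simp: mat_mult_eq_scale cyc_perm_def eq_diff_eq)
  then show ?thesis
    by (simp add: vec_eq_iff columns_matrix_mult_single_entry)
qed

lemma exhaust_3_from_0: "(j::3) = 0 \<or> j = 1 \<or> j = 2"
  using exhaust_3[of j] by auto

lemma heisenberg_eigenbasis:
  fixes A B :: "complex^3^3"
  assumes AB: "A ** B = mat c ** (B ** A)" and c: "c ^ 3 = 1"
    and B: "B ** B ** B = mat \<beta>" "\<beta> \<noteq> 0"
    and v: "A *v v = l *s v" "v \<noteq> 0"
  obtains s F where "s \<noteq> 0" "\<And>j. F j \<noteq> 0"
    "\<And>j. A *v F j = (l * diag_omega (c\<^sup>2) $ j $ j) *s F j" "\<And>j. B *v F j = s *s F (j - 1)"
proof -
  obtain s where s: "s ^ 3 = \<beta>"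
    using cube_root_exists by blast
  with B(2) have "s \<noteq> 0"
    by auto
  \<comment> \<open>The powers of s rescale v, B v, B^2 v so that B shifts them cyclically up to the factor s.\<close>
  define F :: "3 \<Rightarrow> complex^3" where
    "F j = (if j = 0 then v else if j = 1 then (1 / s\<^sup>2) *s (B *v (B *v v)) else (1 / s) *s (B *v v))" for j
  have "B *v v \<noteq> 0" "B *v (B *v v) \<noteq> 0"
    using injective_if_cube_scalar[OF B] v(2) by metis+
  then have "F j \<noteq> 0" for j
    using \<open>s \<noteq> 0\<close> v(2) by (simp add: F_def)
  moreover have "A *v F j = (l * diag_omega (c\<^sup>2) $ j $ j) *s F j" for j
  proof -
    have "A *v (B *v v) = (c * l) *s (B *v v)" "A *v (B *v (B *v v)) = (c * (c * l)) *s (B *v (B *v v))"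
      using eigenvector_shift[OF AB] v(1) by blast+
    moreover have "c\<^sup>2 * c\<^sup>2 = c"
      using c by (simp add: power2_eq_square power3_eq_cube) (metis mult.assoc mult_1_right)
    ultimately show ?thesis
      using exhaust_3_from_0[of j] v(1)
      by (auto simp: F_def diag_omega_def vector_scalar_commute power2_eq_square mult_ac)
  qed
  moreover have "B *v F j = s *s F (j - 1)" for j
  proof -
    have "B *v (B *v (B *v v)) = \<beta> *s v"
      using B(1) by (metis matrix_vector_mul_assoc matrix_vector_mult_mat)
    then show ?thesis
      using exhaust_3_from_0[of j] s \<open>s \<noteq> 0\<close>
      by (auto simp: F_def vector_scalar_commute vec_eq_iff field_simps power2_eq_square power3_eq_cube)
  qed
  ultimately show ?thesis
    using that \<open>s \<noteq> 0\<close> by blast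
qed

lemma heisenberg_normal_form:
  fixes A B :: "complex^3^3"
  assumes AB: "A ** B = mat c ** (B ** A)" and c: "c ^ 3 = 1" "c \<noteq> 1"
    and B: "B ** B ** B = mat \<beta>" "\<beta> \<noteq> 0"
    and v: "A *v v = l *s v" "v \<noteq> 0" "l \<noteq> 0"
  obtains Q s where "invertible Q" "s \<noteq> 0"
    "A ** Q = Q ** (mat l ** diag_omega (c\<^sup>2))" "B ** Q = Q ** (mat s ** cyc_perm)"
proof -
  obtain s F where "s \<noteq> 0" and F_nonzero: "\<And>j. F j \<noteq> 0"
    and FA: "\<And>j. A *v F j = (l * diag_omega (c\<^sup>2) $ j $ j) *s F j"
    and FB: "\<And>j. B *v F j = s *s F (j - 1)"
    by (rule heisenberg_eigenbasis[OF AB c(1) B v(1,2)]) blast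
  define Q where "Q = (\<chi> i j. F j $ i)"
  have "A ** Q = Q ** (mat l ** diag_omega (c\<^sup>2))"
    using FA by (simp add: Q_def matrix_mult_columns columns_mult_scaled_diag vec_eq_iff)
  moreover have "B ** Q = Q ** (mat s ** cyc_perm)"
    using FB by (simp add: Q_def matrix_mult_columns columns_mult_scaled_cyc_perm vec_eq_iff)
  moreover have "invertible Q"
    unfolding invertible_left_inverse matrix_left_invertible_ker
  proof (intro allI impI)
    fix x
    assume "Q *v x = 0"
    \<comment> \<open>sum_3 enumerates the type 3 as 1, 2, 3, and 3 = 0 there.\<close>
    then have comb: "x $ 1 *s F 1 + x $ 2 *s F 2 + x $ 3 *s F 3 = 0"
      by (simp add: Q_def columns_matrix_vector_mult sum_3)
    have c_powers: "c\<^sup>2 \<noteq> 1" "c\<^sup>2 \<noteq> c" "c\<^sup>2 * c\<^sup>2 = c"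
      using primitive_cube_root_of_unity_powers[OF c] by blast+
    then have "diag_omega (c\<^sup>2) $ 1 $ 1 = c\<^sup>2" "diag_omega (c\<^sup>2) $ 2 $ 2 = c" "diag_omega (c\<^sup>2) $ 3 $ 3 = 1"
      by (simp_all add: diag_omega_def power2_eq_square[of "c\<^sup>2"])
    then show "x = 0"
      using independent_three_eigenvectors[OF FA FA FA F_nonzero F_nonzero F_nonzero _ _ _ comb]
        c_powers v(3) c(2)
      by (simp add: vec_eq_iff forall_3)
  qed
  ultimately show ?thesis
    using that \<open>s \<noteq> 0\<close> by blast
qed

theorem lemma5p5:
  fixes \<rho> :: "3^2 \<Rightarrow> complex^3^3"
  assumes "pgl_action \<rho>"
    and "finite (nonfree_points \<rho>)"
  shows "\<exists>g1 g2 :: 3^2. {a *s g1 + b *s g2 | a b :: 3. True} = UNIV \<and>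
           (\<exists>P :: complex^3^3. invertible P \<and>
              (\<exists>\<omega>::complex. \<omega> ^ 3 = 1 \<and> \<omega> \<noteq> 1 \<and>
                 proj_eq (P ** \<rho> g1 ** matrix_inv P) (diag_omega \<omega>) \<and>
                 proj_eq (P ** \<rho> g2 ** matrix_inv P) cyc_perm))"
proof -
  define g1 g2 :: "3^2" where "g1 = axis 1 1" and "g2 = axis 2 1"
  obtain c where AB: "\<rho> g1 ** \<rho> g2 = mat c ** (\<rho> g2 ** \<rho> g1)" and c: "c ^ 3 = 1" "c \<noteq> 1"
    using pgl_action_commutator_primitive[OF assms axis_3_2_combinations_nonzero] g1_def g2_def by metis
  obtain \<beta> where "\<rho> g2 ** \<rho> g2 ** \<rho> g2 = mat \<beta>" "\<beta> \<noteq> 0"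
    using pgl_action_cube_scalar[OF assms(1)] by metis
  moreover obtain v l where "\<rho> g1 *v v = l *s v" "v \<noteq> 0" "l \<noteq> 0"
    using pgl_action_eigenvector[OF assms axis_3_2_combinations_nonzero(1)] g1_def by metis
  ultimately obtain Q s where Q: "invertible Q" "s \<noteq> 0"
    "\<rho> g1 ** Q = Q ** (mat l ** diag_omega (c\<^sup>2))" "\<rho> g2 ** Q = Q ** (mat s ** cyc_perm)"
    using heisenberg_normal_form[OF AB c] by blast
  have "(c\<^sup>2) ^ 3 = (c ^ 3)\<^sup>2"
    by (metis mult.commute power_mult)
  then have "(c\<^sup>2) ^ 3 = 1" "c\<^sup>2 \<noteq> 1"
    using c primitive_cube_root_of_unity_powers[OF c] by simp_all
  moreover have "invertible (matrix_inv Q)"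
    using matrix_inv_matrix_inv[OF Q(1)] by blast
  ultimately show ?thesis
    using span_axis_3_2 matrix_inv_conjugate[OF Q(1) Q(3)] matrix_inv_conjugate[OF Q(1) Q(4)] Q(2) \<open>l \<noteq> 0\<close>
    unfolding g1_def g2_def proj_eq_iff_mat by blast
qed

end
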